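(* Define, for $n\ge 0$, $$d_n(q)=\sum_{\pi\in \mathcal I^C_{2n}(321)}q^{\mathrm{des}^+(\pi)},\qquad p_n(q)=\sum_{\pi\in \mathcal I^C_{2n}(321)}q^{\mathrm{maj}^+(\pi)}$$ (with $\mathcal I^C_0(321)$ consisting of the empty permutation). Then for $n\ge 2$, $$d_n(q)=2d_{n-1}(q)+(q-1)d_{n-2}(q),\qquad p_n(q)=(1+q)p_{n-1}(q)+(q^n-q)p_{n-2}(q).$$
   Context: A permutation $\pi\in\mathcal S_m$ is centrosymmetric if $\pi(i)+\pi(m+1-i)=m+1$ for all $i$; $\mathcal I^C_m(321)$ is the set of centrosymmetric involutions in $\mathcal S_m$ avoiding $321$. For $\pi\in\mathcal S_{2n}$, $\mathrm{Des}^+(\pi)$ is the set of positions $i\in\{1,\dots,n\}$ with $\pi(i)>\pi(i+1)$, $\mathrm{des}^+(\pi)=|\mathrm{Des}^+(\pi)|$ and $\mathrm{maj}^+(\pi)=\sum_{i\in\mathrm{Des}^+(\pi)}i$. *)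

theory Defs
  imports "HOL-Combinatorics.Permutations"
begin

text \<open>Permutations of [m] = {1..m} are functions nat => nat permuting {1..m}
  (identity outside). For m = 0 the only one is the identity (empty permutation).\<close>

definition centrosymmetric :: "nat \<Rightarrow> (nat \<Rightarrow> nat) \<Rightarrow> bool" where
  "centrosymmetric m \<pi> \<longleftrightarrow> (\<forall>i\<in>{1..m}. \<pi> i + \<pi> (m + 1 - i) = m + 1)"

definition is_involution :: "nat \<Rightarrow> (nat \<Rightarrow> nat) \<Rightarrow> bool" where
  "is_involution m \<pi> \<longleftrightarrow> (\<forall>i\<in>{1..m}. \<pi> (\<pi> i) = i)"

definition avoids321 :: "nat \<Rightarrow> (nat \<Rightarrow> nat) \<Rightarrow> bool" where
  "avoids321 m \<pi> \<longleftrightarrow>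
     \<not> (\<exists>i j k. 1 \<le> i \<and> i < j \<and> j < k \<and> k \<le> m \<and> \<pi> i > \<pi> j \<and> \<pi> j > \<pi> k)"

definition ICinv321 :: "nat \<Rightarrow> (nat \<Rightarrow> nat) set" where
  "ICinv321 m = {\<pi>. \<pi> permutes {1..m} \<and> is_involution m \<pi> \<and> centrosymmetric m \<pi> \<and> avoids321 m \<pi>}"

definition DesPlus :: "nat \<Rightarrow> (nat \<Rightarrow> nat) \<Rightarrow> nat set" where
  "DesPlus n \<pi> = {i\<in>{1..n}. \<pi> i > \<pi> (i + 1)}"

definition desPlus :: "nat \<Rightarrow> (nat \<Rightarrow> nat) \<Rightarrow> nat" where
  "desPlus n \<pi> = card (DesPlus n \<pi>)"

definition majPlus :: "nat \<Rightarrow> (nat \<Rightarrow> nat) \<Rightarrow> nat" where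
  "majPlus n \<pi> = \<Sum> (DesPlus n \<pi>)"

definition dpoly :: "nat \<Rightarrow> 'a::comm_ring_1 \<Rightarrow> 'a" where
  "dpoly n q = (\<Sum>\<pi>\<in>ICinv321 (2*n). q ^ desPlus n \<pi>)"

definition ppoly :: "nat \<Rightarrow> 'a::comm_ring_1 \<Rightarrow> 'a" where
  "ppoly n q = (\<Sum>\<pi>\<in>ICinv321 (2*n). q ^ majPlus n \<pi>)"

end

theory Submission
  imports Defs
begin

text \<open>
  Sending a centrosymmetric 321-avoiding involution \<open>\<pi>\<close> of \<open>[2n]\<close> to its set \<open>S\<close> of
  excedances \<open>i \<le> n\<close> (positions with \<open>i < \<pi> i\<close>) is a bijection onto the subsets of \<open>[n]\<close>.
  The inverse reads \<open>S\<close> as a path: in the first half, step \<open>i\<close> goes up if \<open>i \<in> S\<close>, goes down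
  if \<open>i \<notin> S\<close> and the path is above ground, and is flat (a fixed point) otherwise; the second
  half is the mirror image of the first. Pairing the \<open>k\<close>-th up step with the \<open>k\<close>-th down step
  gives the involution, since in a 321-avoiding involution excedances as well as deficiencies
  are paired in increasing order. A descent at \<open>i \<le> n\<close> is then exactly the last element of
  a run of consecutive elements of \<open>S\<close>, so \<open>d\<^sub>n\<close> and \<open>p\<^sub>n\<close> enumerate subsets of \<open>[n]\<close> by the
  number and by the sum of their run ends, and removing \<open>n\<close> from the subsets gives the
  recurrences.
\<close>

definition count_upto :: "(nat \<Rightarrow> bool) \<Rightarrow> nat \<Rightarrow> nat" where
  "count_upto P j = card {t \<in> {1..j}. P t}"

lemma count_upto_0 [simp]: "count_upto P 0 = 0"
  by (simp add: count_upto_def)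

lemma count_upto_Suc: "count_upto P (Suc j) = count_upto P j + (if P (Suc j) then 1 else 0)"
proof -
  have "{t \<in> {1..Suc j}. P t} =
      (if P (Suc j) then insert (Suc j) {t \<in> {1..j}. P t} else {t \<in> {1..j}. P t})"
    by (auto simp: le_Suc_eq)
  then show ?thesis by (simp add: count_upto_def)
qed

lemma count_upto_mono: "i \<le> j \<Longrightarrow> count_upto P i \<le> count_upto P j"
  unfolding count_upto_def by (rule card_mono) auto

lemma count_upto_strict_mono:
  assumes "P j" "i < j" shows "count_upto P i < count_upto P j"
proof -
  obtain j' where j: "j = Suc j'" using assms(2) by (cases j) auto
  have "count_upto P i \<le> count_upto P j'" using assms j by (intro count_upto_mono) auto
  then show ?thesis using assms j by (simp add: count_upto_Suc)
qed

lemma count_upto_pos: assumes "P j" "1 \<le> j" shows "1 \<le> count_upto P j"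
proof -
  obtain j' where j: "j = Suc j'" using assms(2) by (cases j) auto
  then show ?thesis using assms by (simp add: count_upto_Suc)
qed

lemma count_upto_inj:
  assumes "P i" "P j" "count_upto P i = count_upto P j" shows "i = j"
  using count_upto_strict_mono[of P i j] count_upto_strict_mono[of P j i] assms
  by (cases "i < j"; cases "j < i") auto

lemma count_upto_surj:
  "1 \<le> k \<Longrightarrow> k \<le> count_upto P m \<Longrightarrow> \<exists>j. 1 \<le> j \<and> j \<le> m \<and> P j \<and> count_upto P j = k"
proof (induction m)
  case 0 then show ?case by simp
next
  case (Suc m)
  show ?case
  proof (cases "k \<le> count_upto P m")
    case True with Suc show ?thesis by force
  next
    case False
    then have "P (Suc m)" "k = count_upto P (Suc m)"
      using Suc.prems by (auto simp: count_upto_Suc split: if_splits)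
    then show ?thesis by auto
  qed
qed

lemma count_upto_cong:
  "(\<And>t. 1 \<le> t \<Longrightarrow> t \<le> j \<Longrightarrow> P t = Q t) \<Longrightarrow> count_upto P j = count_upto Q j"
  unfolding count_upto_def by (rule arg_cong[where f=card]) auto

text \<open>The truncated subtraction makes a step outside \<open>S\<close> at ground level flat.\<close>

fun level :: "nat set \<Rightarrow> nat \<Rightarrow> nat" where
  "level S 0 = 0"
| "level S (Suc i) = (if Suc i \<in> S then Suc (level S i) else level S i - 1)"

definition up_step :: "nat \<Rightarrow> nat set \<Rightarrow> nat \<Rightarrow> bool" where
  "up_step n S i \<longleftrightarrow> 1 \<le> i \<and> i \<le> 2*n \<and>
     (if i \<le> n then i \<in> S else 2*n+1-i \<notin> S \<and> 0 < level S (2*n - i))"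

definition down_step :: "nat \<Rightarrow> nat set \<Rightarrow> nat \<Rightarrow> bool" where
  "down_step n S i \<longleftrightarrow> 1 \<le> i \<and> i \<le> 2*n \<and>
     (if i \<le> n then i \<notin> S \<and> 0 < level S (i - 1) else 2*n+1-i \<in> S)"

definition sym_level :: "nat \<Rightarrow> nat set \<Rightarrow> nat \<Rightarrow> nat" where
  "sym_level n S j = (if j \<le> n then level S j else level S (2*n - j))"

definition matching :: "nat \<Rightarrow> nat set \<Rightarrow> nat \<Rightarrow> nat" where
  "matching n S i =
     (if up_step n S i
      then THE j. down_step n S j \<and> count_upto (down_step n S) j = count_upto (up_step n S) i
      else if down_step n S i
      then THE j. up_step n S j \<and> count_upto (up_step n S) j = count_upto (down_step n S) i
      else i)"

lemma level_eq_pred: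
  "0 < k \<Longrightarrow> level S k = (if k \<in> S then Suc (level S (k-1)) else level S (k-1) - 1)"
  by (cases k) auto

lemma count_up_eq_count_down_plus_level:
  "j \<le> 2*n \<Longrightarrow> count_upto (up_step n S) j = count_upto (down_step n S) j + sym_level n S j"
proof (induction j)
  case 0 then show ?case by (simp add: sym_level_def)
next
  case (Suc j)
  show ?case
  proof (cases "Suc j \<le> n")
    case True
    then show ?thesis
      using Suc by (auto simp: count_upto_Suc up_step_def down_step_def sym_level_def)
  next
    case False
    define k where "k = 2*n - j"
    have k: "0 < k" "2*n + 1 - Suc j = k" "2*n - Suc j = k - 1"
      "sym_level n S j = level S k" "sym_level n S (Suc j) = level S (k-1)"
      using False Suc.prems by (auto simp: k_def sym_level_def dest: le_antisym[of j n])
    have "up_step n S (Suc j) \<longleftrightarrow> k \<notin> S \<and> 0 < level S (k-1)"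
      "down_step n S (Suc j) \<longleftrightarrow> k \<in> S"
      using False Suc.prems k by (auto simp: up_step_def down_step_def)
    then show ?thesis using Suc k level_eq_pred[of k S] by (auto simp: count_upto_Suc)
  qed
qed

lemma sym_level_pos_at_up: "up_step n S i \<Longrightarrow> 0 < sym_level n S i"
  using level_eq_pred[of i S] by (auto simp: up_step_def sym_level_def split: if_splits)

lemma count_down_less_up_at_up:
  "up_step n S i \<Longrightarrow> count_upto (down_step n S) i < count_upto (up_step n S) i"
  using count_up_eq_count_down_plus_level[of i n S] sym_level_pos_at_up[of n S i]
  by (auto simp: up_step_def)

lemma sym_level_pos_before_down: "down_step n S i \<Longrightarrow> 0 < sym_level n S (i - 1)"
proof -
  assume D: "down_step n S i"
  show ?thesis
  proof (cases "i \<le> n")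
    case True then show ?thesis using D by (auto simp: down_step_def sym_level_def)
  next
    case False
    define k where "k = 2*n+1-i"
    have "k \<in> S" "0 < k" using D False by (auto simp: down_step_def sym_level_def k_def)
    moreover have "sym_level n S (i - 1) = level S k"
      using D False by (cases "i = Suc n") (auto simp: down_step_def sym_level_def k_def)
    ultimately show ?thesis using level_eq_pred[of k S] by simp
  qed
qed

lemma count_down_less_up_before_down:
  "down_step n S i \<Longrightarrow> count_upto (down_step n S) (i-1) < count_upto (up_step n S) (i-1)"
  using count_up_eq_count_down_plus_level[of "i-1" n S] sym_level_pos_before_down[of n S i]
  by (auto simp: down_step_def)

lemma sym_level_zero_before_flat:
  assumes "1 \<le> i" "i \<le> 2*n" "\<not> up_step n S i" "\<not> down_step n S i"
  shows "sym_level n S (i - 1) = 0"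
proof (cases "i \<le> n")
  case True then show ?thesis using assms by (auto simp: down_step_def up_step_def sym_level_def)
next
  case False
  define k where "k = 2*n+1-i"
  have "k \<notin> S" "0 < k" "level S (k-1) = 0"
    using assms False by (auto simp: down_step_def up_step_def sym_level_def k_def)
  moreover have "sym_level n S (i - 1) = level S k"
    using assms False by (cases "i = Suc n") (auto simp: sym_level_def k_def)
  ultimately show ?thesis using level_eq_pred[of k S] by simp
qed

lemma count_up_eq_down_before_flat:
  assumes "1 \<le> i" "i \<le> 2*n" "\<not> up_step n S i" "\<not> down_step n S i"
  shows "count_upto (up_step n S) (i-1) = count_upto (down_step n S) (i-1)"
  using count_up_eq_count_down_plus_level[of "i-1" n S] sym_level_zero_before_flat[OF assms] assms
  by auto

lemma up_step_iff_mirror_down_step: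
  assumes "1 \<le> i" "i \<le> 2*n" shows "up_step n S i \<longleftrightarrow> down_step n S (2*n+1-i)"
proof (cases "i \<le> n")
  case True then show ?thesis using assms by (auto simp: down_step_def up_step_def)
next
  case False then show ?thesis using assms by (auto simp: down_step_def up_step_def Suc_diff_Suc)
qed

lemma down_step_iff_mirror_up_step:
  assumes "1 \<le> i" "i \<le> 2*n" shows "down_step n S i \<longleftrightarrow> up_step n S (2*n+1-i)"
  using up_step_iff_mirror_down_step[of "2*n+1-i" n S] assms by auto

lemma up_step_not_down_step: "up_step n S i \<Longrightarrow> \<not> down_step n S i"
  by (auto simp: up_step_def down_step_def split: if_splits)

lemma up_step_range: "up_step n S i \<Longrightarrow> 1 \<le> i \<and> i \<le> 2*n"
  by (simp add: up_step_def)

lemma down_step_range: "down_step n S i \<Longrightarrow> 1 \<le> i \<and> i \<le> 2*n"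
  by (simp add: down_step_def)

lemma count_up_eq_count_down_total:
  "count_upto (up_step n S) (2*n) = count_upto (down_step n S) (2*n)"
  using count_up_eq_count_down_plus_level[of "2*n" n S] by (simp add: sym_level_def)

lemma count_up_mirror:
  "j \<le> 2*n \<Longrightarrow>
    count_upto (up_step n S) (2*n - j) + count_upto (down_step n S) j =
      count_upto (down_step n S) (2*n)"
proof (induction j)
  case 0 then show ?case using count_up_eq_count_down_total by simp
next
  case (Suc j)
  have e: "2*n - j = Suc (2*n - Suc j)" using Suc.prems by simp
  have "up_step n S (2*n - j) \<longleftrightarrow> down_step n S (Suc j)"
    using up_step_iff_mirror_down_step[of "2*n-j" n S] Suc.prems by (simp add: Suc_diff_le)
  then show ?case using Suc e by (simp add: count_upto_Suc)
qed

lemma count_down_mirror: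
  "j \<le> 2*n \<Longrightarrow>
    count_upto (down_step n S) (2*n - j) + count_upto (up_step n S) j =
      count_upto (down_step n S) (2*n)"
proof (induction j)
  case 0 then show ?case by simp
next
  case (Suc j)
  have e: "2*n - j = Suc (2*n - Suc j)" using Suc.prems by simp
  have "down_step n S (2*n - j) \<longleftrightarrow> up_step n S (Suc j)"
    using down_step_iff_mirror_up_step[of "2*n-j" n S] Suc.prems by (simp add: Suc_diff_le)
  then show ?case using Suc e by (simp add: count_upto_Suc)
qed

lemma matching_up:
  assumes U: "up_step n S i"
  shows "down_step n S (matching n S i)"
    and "count_upto (down_step n S) (matching n S i) = count_upto (up_step n S) i"
    and "i < matching n S i"
proof -
  have r: "1 \<le> i" "i \<le> 2*n" using U by (auto simp: up_step_def)
  have "1 \<le> count_upto (up_step n S) i" using count_upto_pos U r by blast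
  moreover have "count_upto (up_step n S) i \<le> count_upto (down_step n S) (2*n)"
    using count_upto_mono[OF r(2), of "up_step n S"] count_up_eq_count_down_total by simp
  ultimately obtain j
    where j: "down_step n S j" "count_upto (down_step n S) j = count_upto (up_step n S) i"
    using count_upto_surj by blast
  have "(THE j. down_step n S j \<and> count_upto (down_step n S) j = count_upto (up_step n S) i) = j"
    by (rule the_equality) (use j count_upto_inj[of "down_step n S"] in auto)
  then have pj: "matching n S i = j" using U by (simp add: matching_def)
  have "i < j"
  proof (rule ccontr)
    assume "\<not> i < j"
    then have "count_upto (down_step n S) j \<le> count_upto (down_step n S) i"
      by (intro count_upto_mono) simp
    then show False using j count_down_less_up_at_up[OF U] by simp
  qed
  then show "down_step n S (matching n S i)"
    "count_upto (down_step n S) (matching n S i) = count_upto (up_step n S) i"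
    "i < matching n S i"
    using pj j by simp_all
qed

lemma matching_down:
  assumes D: "down_step n S i"
  shows "up_step n S (matching n S i)"
    and "count_upto (up_step n S) (matching n S i) = count_upto (down_step n S) i"
    and "matching n S i < i"
proof -
  have r: "1 \<le> i" "i \<le> 2*n" using D by (auto simp: down_step_def)
  have "1 \<le> count_upto (down_step n S) i" using count_upto_pos D r by blast
  moreover have "count_upto (down_step n S) i \<le> count_upto (up_step n S) (2*n)"
    using count_upto_mono[OF r(2), of "down_step n S"] count_up_eq_count_down_total by simp
  ultimately obtain j
    where j: "up_step n S j" "count_upto (up_step n S) j = count_upto (down_step n S) i"
    using count_upto_surj by blast
  have "(THE j. up_step n S j \<and> count_upto (up_step n S) j = count_upto (down_step n S) i) = j"
    by (rule the_equality) (use j count_upto_inj[of "up_step n S"] in auto)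
  then have pj: "matching n S i = j" using D up_step_not_down_step by (auto simp: matching_def)
  have "j < i"
  proof (rule ccontr)
    assume "\<not> j < i"
    moreover have "j \<noteq> i" using j D up_step_not_down_step by blast
    ultimately have "i - 1 < j" by simp
    then have "count_upto (up_step n S) (i-1) < count_upto (up_step n S) j"
      using count_upto_strict_mono j(1) by blast
    moreover have "count_upto (down_step n S) i = Suc (count_upto (down_step n S) (i-1))"
      using D r count_upto_Suc[of "down_step n S" "i-1"] by simp
    ultimately show False using j count_down_less_up_before_down[OF D] by simp
  qed
  then show "up_step n S (matching n S i)"
    "count_upto (up_step n S) (matching n S i) = count_upto (down_step n S) i"
    "matching n S i < i"
    using pj j by simp_all
qed

lemma matching_flat: "\<not> up_step n S i \<Longrightarrow> \<not> down_step n S i \<Longrightarrow> matching n S i = i"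
  by (simp add: matching_def)

lemma matching_involutive: "matching n S (matching n S i) = i"
proof -
  consider "up_step n S i" | "down_step n S i" | "\<not> up_step n S i \<and> \<not> down_step n S i"
    by blast
  then show ?thesis
  proof cases
    case 1
    then show ?thesis
      using matching_up[of n S i] matching_down[of n S "matching n S i"]
        count_upto_inj[of "up_step n S" "matching n S (matching n S i)" i] by simp
  next
    case 2
    then show ?thesis
      using matching_down[of n S i] matching_up[of n S "matching n S i"]
        count_upto_inj[of "down_step n S" "matching n S (matching n S i)" i] by simp
  qed (simp add: matching_flat)
qed

lemma matching_centrosymmetric_up:
  assumes U: "up_step n S i" shows "matching n S i + matching n S (2*n+1-i) = 2*n+1"
proof -
  have r: "1 \<le> i" "i \<le> 2*n" using U by (auto simp: up_step_def)
  define j where "j = matching n S i"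
  have j: "down_step n S j" "count_upto (down_step n S) j = count_upto (up_step n S) i"
    using matching_up[OF U] by (auto simp: j_def)
  have rj: "1 \<le> j" "j \<le> 2*n" using j by (auto simp: down_step_def)
  have D: "down_step n S (2*n+1-i)" using up_step_iff_mirror_down_step[OF r] U by simp
  have U': "up_step n S (2*n+1-j)" using down_step_iff_mirror_up_step[OF rj] j by simp
  have "count_upto (up_step n S) (2*n+1-j) + count_upto (down_step n S) (j-1)
      = count_upto (down_step n S) (2*n)"
    using count_up_mirror[of "j-1" n S] rj by (simp add: Suc_diff_le)
  moreover have "count_upto (down_step n S) (2*n+1-i) + count_upto (up_step n S) (i-1)
      = count_upto (down_step n S) (2*n)"
    using count_down_mirror[of "i-1" n S] r by (simp add: Suc_diff_le)
  moreover have "count_upto (down_step n S) j = Suc (count_upto (down_step n S) (j-1))"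
    using count_upto_Suc[of "down_step n S" "j-1"] rj j by simp
  moreover have "count_upto (up_step n S) i = Suc (count_upto (up_step n S) (i-1))"
    using count_upto_Suc[of "up_step n S" "i-1"] r U by simp
  ultimately have "count_upto (up_step n S) (2*n+1-j) = count_upto (down_step n S) (2*n+1-i)"
    using j by simp
  then have "matching n S (2*n+1-i) = 2*n+1-j"
    using matching_down[OF D] U' count_upto_inj[of "up_step n S"] by metis
  then show ?thesis using rj by (simp add: j_def)
qed

lemma matching_centrosymmetric:
  assumes "1 \<le> i" "i \<le> 2*n" shows "matching n S i + matching n S (2*n+1-i) = 2*n+1"
proof -
  consider "up_step n S i" | "down_step n S i" | "\<not> up_step n S i \<and> \<not> down_step n S i"
    by blast
  then show ?thesis
  proof cases
    case 1 then show ?thesis by (rule matching_centrosymmetric_up)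
  next
    case 2
    then have "up_step n S (2*n+1-i)" using down_step_iff_mirror_up_step[OF assms] by simp
    from matching_centrosymmetric_up[OF this] show ?thesis using assms by simp
  next
    case 3
    then have "\<not> up_step n S (2*n+1-i)" "\<not> down_step n S (2*n+1-i)"
      using down_step_iff_mirror_up_step[OF assms] up_step_iff_mirror_down_step[OF assms]
      by simp_all
    then show ?thesis using 3 assms by (simp add: matching_flat)
  qed
qed

lemma matching_mono_up:
  "up_step n S x \<Longrightarrow> up_step n S y \<Longrightarrow> x < y \<Longrightarrow> matching n S x < matching n S y"
  using count_upto_strict_mono[of "up_step n S" y x] matching_up[of n S x] matching_up[of n S y]
    count_upto_mono[of "matching n S y" "matching n S x" "down_step n S"]
  by (cases "matching n S x < matching n S y") auto

lemma matching_mono_down: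
  "down_step n S x \<Longrightarrow> down_step n S y \<Longrightarrow> x < y \<Longrightarrow> matching n S x < matching n S y"
  using count_upto_strict_mono[of "down_step n S" y x]
    matching_down[of n S x] matching_down[of n S y]
    count_upto_mono[of "matching n S y" "matching n S x" "up_step n S"]
  by (cases "matching n S x < matching n S y") auto

lemma matching_down_above_flat:
  assumes d: "down_step n S d" and f: "\<not> up_step n S f" "\<not> down_step n S f" "1 \<le> f" "f < d"
  shows "f < matching n S d"
proof (rule ccontr)
  assume "\<not> f < matching n S d"
  moreover have "matching n S d \<noteq> f" using matching_down[OF d] f by auto
  ultimately have "matching n S d < f" by simp
  then have "count_upto (up_step n S) (matching n S d) \<le> count_upto (up_step n S) (f - 1)"
    by (intro count_upto_mono) simp
  also have "\<dots> = count_upto (down_step n S) (f - 1)"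
    using count_up_eq_down_before_flat[of f n S] f down_step_range[OF d] by simp
  also have "\<dots> < count_upto (down_step n S) d"
    using count_upto_strict_mono[of "down_step n S", OF d] f by simp
  finally show False using matching_down[OF d] by simp
qed

text \<open>Pigeonhole: two of any three positions lie in the same class.\<close>

lemma avoids321_if_increasing_on_classes:
  fixes c :: "nat \<Rightarrow> bool"
  assumes "\<And>x y. 1 \<le> x \<Longrightarrow> x < y \<Longrightarrow> y \<le> m \<Longrightarrow> c x = c y \<Longrightarrow> f x < f y"
  shows "avoids321 m f"
  unfolding avoids321_def
proof clarify
  fix i j k assume a: "1 \<le> i" "i < j" "j < k" "k \<le> m" "f j < f i" "f k < f j"
  have "c i \<noteq> c j" "c j \<noteq> c k" "c i \<noteq> c k"
    using assms[of i j] assms[of j k] assms[of i k] a by auto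
  then show False by blast
qed

lemma matching_avoids321: "avoids321 (2*n) (matching n S)"
proof (rule avoids321_if_increasing_on_classes[where c = "up_step n S"])
  fix x y assume a: "1 \<le> x" "x < y" "y \<le> 2*n" "up_step n S x = up_step n S y"
  show "matching n S x < matching n S y"
  proof (cases "up_step n S x")
    case True then show ?thesis using matching_mono_up a by simp
  next
    case nUx: False
    then have nUy: "\<not> up_step n S y" using a by simp
    consider "down_step n S x" "down_step n S y" | "down_step n S x" "\<not> down_step n S y"
      | "\<not> down_step n S x" "down_step n S y" | "\<not> down_step n S x" "\<not> down_step n S y"
      by blast
    then show ?thesis
    proof cases
      case 1 then show ?thesis using matching_mono_down a by simp
    next
      case 2 then show ?thesis using matching_flat[OF nUy] matching_down(3)[of n S x] a by simp
    next
      case 3 then show ?thesis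
        using matching_down_above_flat[of n S y x] matching_flat[OF nUx] nUx a by simp
    next
      case 4 then show ?thesis using matching_flat[OF nUx] matching_flat[OF nUy] a by simp
    qed
  qed
qed

lemma matching_range: "1 \<le> i \<Longrightarrow> i \<le> 2*n \<Longrightarrow> 1 \<le> matching n S i \<and> matching n S i \<le> 2*n"
  using matching_up(1)[of n S i] matching_down(1)[of n S i] matching_flat[of n S i]
    up_step_range[of n S "matching n S i"] down_step_range[of n S "matching n S i"] by metis

lemma matching_outside: "\<not> (1 \<le> i \<and> i \<le> 2*n) \<Longrightarrow> matching n S i = i"
  using matching_flat up_step_range down_step_range by blast

lemma matching_permutes: "matching n S permutes {1..2*n}"
proof (rule bij_imp_permutes)
  show "bij_betw (matching n S) {1..2*n} {1..2*n}"
    by (rule bij_betw_byWitness[where f'="matching n S"])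
      (use matching_involutive matching_range in auto)
qed (use matching_outside in auto)

lemma matching_in_ICinv321: "matching n S \<in> ICinv321 (2*n)"
  unfolding ICinv321_def is_involution_def centrosymmetric_def
  using matching_permutes matching_involutive matching_avoids321 matching_centrosymmetric by auto

lemma excedances_matching:
  assumes "S \<subseteq> {1..n}" shows "{i \<in> {1..n}. i < matching n S i} = S"
proof -
  have "i < matching n S i \<longleftrightarrow> i \<in> S" if "i \<in> {1..n}" for i
    using that matching_up(3)[of n S i] matching_down(3)[of n S i] matching_flat[of n S i]
    by (cases "up_step n S i"; cases "down_step n S i") (auto simp: up_step_def down_step_def)
  then show ?thesis using assms by auto
qed

locale ic321_involution =
  fixes m :: nat and p :: "nat \<Rightarrow> nat"
  assumes IC: "p \<in> ICinv321 m"
begin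

lemma is_perm: "p permutes {1..m}"
  using IC by (simp add: ICinv321_def)

lemma invol: "1 \<le> i \<Longrightarrow> i \<le> m \<Longrightarrow> p (p i) = i"
  using IC by (simp add: ICinv321_def is_involution_def)

lemma range_bound: "1 \<le> i \<Longrightarrow> i \<le> m \<Longrightarrow> 1 \<le> p i \<and> p i \<le> m"
  using permutes_in_image[OF is_perm, of i] by simp

lemma inj_app: "p x = p y \<Longrightarrow> x = y"
  using permutes_inj[OF is_perm] by (simp add: inj_eq)

lemma fixed_outside: "\<not> (1 \<le> i \<and> i \<le> m) \<Longrightarrow> p i = i"
  using permutes_not_in[OF is_perm] by simp

lemma no_321: "1 \<le> i \<Longrightarrow> i < j \<Longrightarrow> j < k \<Longrightarrow> k \<le> m \<Longrightarrow> p j < p i \<Longrightarrow> p k < p j \<Longrightarrow> False"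
  using IC unfolding ICinv321_def avoids321_def by blast

lemma excedances_increasing:
  assumes "1 \<le> e" "e < e'" "e' \<le> m" "e < p e" "e' < p e'" shows "p e < p e'"
proof (rule ccontr)
  assume "\<not> p e < p e'"
  moreover have "p e \<noteq> p e'" using inj_app assms by auto
  ultimately have "p e' < p e" by simp
  moreover have "p e' \<le> m" using range_bound assms by simp
  moreover have "p (p e') = e'" using invol assms by simp
  ultimately show False using no_321[of e e' "p e'"] assms by simp
qed

lemma deficiencies_increasing:
  assumes "1 \<le> d" "d < d'" "d' \<le> m" "p d < d" "p d' < d'" shows "p d < p d'"
proof (rule ccontr)
  assume "\<not> p d < p d'"
  moreover have "p d \<noteq> p d'" using inj_app assms by auto
  ultimately have "p d' < p d" by simp
  moreover have "1 \<le> p d'" "p d \<le> m" "p (p d') = d'" "p (p d) = d"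
    using range_bound invol assms by auto
  ultimately show False using excedances_increasing[of "p d'" "p d"] assms by simp
qed

lemma no_fixed_point_in_arc: assumes "1 \<le> e" "e < f" "f < p e" "p f = f" shows False
proof -
  have "e \<le> m"
  proof (rule ccontr)
    assume "\<not> e \<le> m"
    then show False using fixed_outside[of e] assms by simp
  qed
  then have "p e \<le> m" "p (p e) = e" using range_bound invol assms by auto
  then show False using no_321[of e f "p e"] \<open>e \<le> m\<close> assms by simp
qed

lemma nonexcedances_increasing:
  assumes "1 \<le> x" "x < y" "y \<le> m" "p x \<le> x" "p y \<le> y" shows "p x < p y"
proof (cases "p x = x")
  case x: True
  show ?thesis
  proof (cases "p y = y")
    case True then show ?thesis using x assms by simp
  next
    case False
    have "1 \<le> p y" "p (p y) = y" using range_bound invol assms by auto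
    moreover have "p y \<noteq> x" using x inj_app[of x y] assms by auto
    ultimately show ?thesis using no_fixed_point_in_arc[of "p y" x] x False assms by fastforce
  qed
next
  case False
  then show ?thesis using deficiencies_increasing[of x y] assms by (cases "p y = y") auto
qed

definition excedance :: "nat \<Rightarrow> bool" where "excedance t \<longleftrightarrow> t < p t"
definition deficiency :: "nat \<Rightarrow> bool" where "deficiency t \<longleftrightarrow> p t < t"

text \<open>An excedance before a fixed point \<open>i\<close> has its partner before \<open>i\<close> too (no fixed point
  lies under an arc), so \<open>p\<close> maps these excedances injectively to deficiencies before \<open>i\<close>.\<close>

lemma count_excedances_le_deficiencies_before_fixed_point:
  assumes "1 \<le> i" "i \<le> m" "p i = i"
  shows "count_upto excedance (i-1) \<le> count_upto deficiency (i-1)"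
  unfolding count_upto_def
proof (rule card_inj_on_le[where f=p])
  show "inj_on p {t \<in> {1..i - 1}. excedance t}" using inj_app by (auto intro: inj_onI)
  show "p ` {t \<in> {1..i - 1}. excedance t} \<subseteq> {t \<in> {1..i - 1}. deficiency t}"
  proof
    fix y assume "y \<in> p ` {t \<in> {1..i - 1}. excedance t}"
    then obtain t where t: "y = p t" "1 \<le> t" "t \<le> i - 1" "t < p t" by (auto simp: excedance_def)
    have "t < i" using t assms by simp
    then have "p t \<noteq> i" "\<not> i < p t"
      using inj_app[of t i] no_fixed_point_in_arc[of t i] assms t by auto
    moreover have "p (p t) = t" using invol t assms by simp
    ultimately show "y \<in> {t \<in> {1..i - 1}. deficiency t}" using t by (auto simp: deficiency_def)
  qed
qed simp

lemma count_deficiencies_less_excedances_before_deficiency: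
  assumes "1 \<le> i" "i \<le> m" "p i < i"
  shows "count_upto deficiency (i-1) < count_upto excedance (i-1)"
proof -
  define A where "A = {t \<in> {1..i - 1}. excedance t}"
  define B where "B = {t \<in> {1..i - 1}. deficiency t}"
  have "p i \<in> A" using range_bound invol assms by (auto simp: A_def excedance_def)
  moreover have "finite A" by (simp add: A_def)
  ultimately have "card (A - {p i}) < card A" by (rule card_Diff1_less[rotated])
  moreover have "card B \<le> card (A - {p i})"
  proof (rule card_inj_on_le[where f=p])
    show "inj_on p B" using inj_app by (auto intro: inj_onI)
    show "p ` B \<subseteq> A - {p i}"
    proof
      fix y assume "y \<in> p ` B"
      then obtain t where t: "y = p t" "1 \<le> t" "t \<le> i - 1" "p t < t"
        by (auto simp: B_def deficiency_def)
      have "1 \<le> p t" "p (p t) = t" using range_bound invol t assms by auto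
      moreover have "p t \<noteq> p i" using inj_app[of t i] t assms by auto
      ultimately show "y \<in> A - {p i}" using t by (auto simp: A_def excedance_def)
    qed
  qed (simp add: A_def)
  ultimately show ?thesis by (simp add: count_upto_def A_def B_def)
qed

text \<open>Excedances being paired in increasing order, \<open>p\<close> maps the excedances up to \<open>e\<close>
  exactly onto the deficiencies up to \<open>p e\<close>.\<close>

lemma count_deficiencies_at_partner_eq_count_excedances:
  assumes "1 \<le> e" "e \<le> m" "e < p e"
  shows "count_upto deficiency (p e) = count_upto excedance e"
proof -
  have pe: "p e \<le> m" using range_bound assms by simp
  have "p ` {t \<in> {1..e}. excedance t} = {t \<in> {1..p e}. deficiency t}"
  proof (intro equalityI subsetI)
    fix y assume "y \<in> p ` {t \<in> {1..e}. excedance t}"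
    then obtain t where t: "y = p t" "1 \<le> t" "t \<le> e" "t < p t" by (auto simp: excedance_def)
    have "p t \<le> p e" using excedances_increasing[of t e] t assms by (cases "t = e") auto
    moreover have "p (p t) = t" using invol t assms by simp
    ultimately show "y \<in> {t \<in> {1..p e}. deficiency t}" using t by (auto simp: deficiency_def)
  next
    fix t assume "t \<in> {t \<in> {1..p e}. deficiency t}"
    then have t: "1 \<le> t" "t \<le> p e" "p t < t" by (auto simp: deficiency_def)
    have ppt: "1 \<le> p t" "p (p t) = t" using range_bound invol t pe by auto
    have "p t \<le> e"
    proof (rule ccontr)
      assume "\<not> p t \<le> e"
      then show False
        using excedances_increasing[of e "p t"] assms ppt t range_bound[of t] pe by simp
    qed
    then have "p t \<in> {t \<in> {1..e}. excedance t}" using t ppt by (simp add: excedance_def)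
    then show "t \<in> p ` {t \<in> {1..e}. excedance t}" using ppt(2) by (metis image_eqI)
  qed
  moreover have "inj_on p {t \<in> {1..e}. excedance t}" using inj_app by (auto intro: inj_onI)
  ultimately show ?thesis unfolding count_upto_def using card_image by fastforce
qed

end

definition run_ends :: "nat set \<Rightarrow> nat set" where
  "run_ends S = {i \<in> S. Suc i \<notin> S}"

locale ic321_even_length = ic321_involution "2*n" p for n :: nat and p :: "nat \<Rightarrow> nat" +
  fixes S :: "nat set"
  defines S_def: "S \<equiv> {i \<in> {1..n}. i < p i}"
begin

lemma mirror: assumes "1 \<le> i" "i \<le> 2*n" shows "p (2*n+1-i) = 2*n+1 - p i"
proof -
  have "p i + p (2*n+1-i) = 2*n+1"
    using IC assms unfolding ICinv321_def centrosymmetric_def by auto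
  then show ?thesis by simp
qed

text \<open>Inductively, the excedances and deficiencies before \<open>i\<close> are the up and down steps, so
  the surplus of excedances before \<open>i\<close> is the level; and \<open>i \<notin> S\<close> is a deficiency exactly when
  that surplus is positive.\<close>

lemma deficiency_iff_down_step_first_half:
  assumes "1 \<le> i" "i \<le> n" shows "p i < i \<longleftrightarrow> down_step n S i"
  using assms
proof (induction i rule: less_induct)
  case (less i)
  have "count_upto excedance (i-1) = count_upto (up_step n S) (i-1)"
    by (rule count_upto_cong) (use less.prems in \<open>auto simp: excedance_def up_step_def S_def\<close>)
  moreover have "count_upto deficiency (i-1) = count_upto (down_step n S) (i-1)"
    by (rule count_upto_cong) (use less in \<open>auto simp: deficiency_def\<close>)
  moreover have "count_upto (up_step n S) (i-1) = count_upto (down_step n S) (i-1) + level S (i-1)"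
    using count_up_eq_count_down_plus_level[of "i-1" n S] less.prems by (auto simp: sym_level_def)
  ultimately have counts: "count_upto deficiency (i-1) + level S (i-1) = count_upto excedance (i-1)"
    by simp
  consider "p i < i" | "p i = i" | "i < p i" by linarith
  then show ?case
  proof cases
    case 1
    then show ?thesis
      using count_deficiencies_less_excedances_before_deficiency[of i] counts less.prems
      by (simp add: down_step_def S_def)
  next
    case 2
    then show ?thesis
      using count_excedances_le_deficiencies_before_fixed_point[of i] counts less.prems
      by (simp add: down_step_def S_def)
  next
    case 3
    then show ?thesis using less.prems by (simp add: down_step_def S_def)
  qed
qed

lemma excedance_deficiency_iff_steps:
  assumes "1 \<le> i" "i \<le> 2*n"
  shows "(i < p i \<longleftrightarrow> up_step n S i) \<and> (p i < i \<longleftrightarrow> down_step n S i)"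
proof (cases "i \<le> n")
  case True
  then show ?thesis using deficiency_iff_down_step_first_half[of i] assms
    by (auto simp: up_step_def S_def)
next
  case False
  define i' where "i' = 2*n+1-i"
  have i': "1 \<le> i'" "i' \<le> n" "i = 2*n+1-i'" using assms False by (auto simp: i'_def)
  have "p i = 2*n+1 - p i'" "p i' \<le> 2*n" using mirror[of i'] range_bound[of i'] i' by auto
  moreover have "up_step n S i \<longleftrightarrow> down_step n S i'" "down_step n S i \<longleftrightarrow> up_step n S i'"
    using up_step_iff_mirror_down_step[of i n S] down_step_iff_mirror_up_step[of i n S] assms
    by (simp_all add: i'_def)
  moreover have "up_step n S i' \<longleftrightarrow> i' < p i'" using i' by (auto simp: up_step_def S_def)
  ultimately show ?thesis using deficiency_iff_down_step_first_half[of i'] i' assms by auto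
qed

lemma eq_matching: "p = matching n S"
proof
  fix i
  have cE: "count_upto excedance j = count_upto (up_step n S) j" if "j \<le> 2*n" for j
    by (rule count_upto_cong)
      (use excedance_deficiency_iff_steps that in \<open>auto simp: excedance_def\<close>)
  have cD: "count_upto deficiency j = count_upto (down_step n S) j" if "j \<le> 2*n" for j
    by (rule count_upto_cong)
      (use excedance_deficiency_iff_steps that in \<open>auto simp: deficiency_def\<close>)
  show "p i = matching n S i"
  proof (cases "1 \<le> i \<and> i \<le> 2*n")
    case False
    then show ?thesis using fixed_outside matching_outside by simp
  next
    case True
    have ri: "1 \<le> p i" "p i \<le> 2*n" and ppi: "p (p i) = i" using range_bound invol True by auto
    note types = excedance_deficiency_iff_steps[OF True[THEN conjunct1] True[THEN conjunct2]]
      excedance_deficiency_iff_steps[OF ri]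
    consider "i < p i" | "p i < i" | "p i = i" by linarith
    then show ?thesis
    proof cases
      case 1
      then have "count_upto (down_step n S) (p i) = count_upto (up_step n S) i"
        using count_deficiencies_at_partner_eq_count_excedances[of i] True cE cD ri by simp
      then show ?thesis
        using 1 types ppi matching_up[of n S i] count_upto_inj[of "down_step n S" "p i"] by simp
    next
      case 2
      then have "count_upto (up_step n S) (p i) = count_upto (down_step n S) i"
        using count_deficiencies_at_partner_eq_count_excedances[of "p i"] ri ppi cE cD True by simp
      then show ?thesis
        using 2 types ppi matching_down[of n S i] count_upto_inj[of "up_step n S" "p i"] by simp
    next
      case 3
      then show ?thesis using types matching_flat by simp
    qed
  qed
qed

lemma descent_iff_run_end:
  assumes "1 \<le> i" "i \<le> n"
  shows "p (Suc i) < p i \<longleftrightarrow> i < p i \<and> \<not> (Suc i \<le> n \<and> Suc i < p (Suc i))"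
proof
  assume d: "p (Suc i) < p i"
  have "i < p i"
  proof (rule ccontr)
    assume "\<not> i < p i"
    then have "p i < p (Suc i)" using d nonexcedances_increasing[of i "Suc i"] assms by simp
    then show False using d by simp
  qed
  moreover have "\<not> (Suc i \<le> n \<and> Suc i < p (Suc i))"
    using excedances_increasing[of i "Suc i"] assms d \<open>i < p i\<close> by auto
  ultimately show "i < p i \<and> \<not> (Suc i \<le> n \<and> Suc i < p (Suc i))" by simp
next
  assume a: "i < p i \<and> \<not> (Suc i \<le> n \<and> Suc i < p (Suc i))"
  show "p (Suc i) < p i"
  proof (cases "Suc i \<le> n")
    case True
    then show ?thesis using a inj_app[of "Suc i" i] by fastforce
  next
    case False
    then have "i = n" using assms by simp
    \<comment> \<open>centrosymmetry forces a descent at \<open>n\<close> after an excedance: \<open>p (n+1) = 2n+1 - p n\<close>\<close>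
    then show ?thesis using a mirror[of n] assms by simp
  qed
qed

lemma DesPlus_eq_run_ends: "DesPlus n p = run_ends S"
  using descent_iff_run_end unfolding DesPlus_def run_ends_def S_def by auto

end

lemma ic321_even_lengthI: "p \<in> ICinv321 (2*n) \<Longrightarrow> ic321_even_length n p"
  by unfold_locales

lemma ICinv321_DesPlus_eq_run_ends:
  "p \<in> ICinv321 (2*n) \<Longrightarrow> DesPlus n p = run_ends {i \<in> {1..n}. i < p i}"
  by (rule ic321_even_length.DesPlus_eq_run_ends[OF ic321_even_lengthI])

lemma bij_betw_excedances:
  "bij_betw (\<lambda>p. {i \<in> {1..n}. i < p i}) (ICinv321 (2*n)) (Pow {1..n})"
proof (rule bij_betw_byWitness[where f'="matching n"])
  show "\<forall>p\<in>ICinv321 (2*n). matching n {i \<in> {1..n}. i < p i} = p"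
    using ic321_even_length.eq_matching ic321_even_lengthI by metis
  show "\<forall>S\<in>Pow {1..n}. {i \<in> {1..n}. i < matching n S i} = S"
    using excedances_matching by blast
qed (use matching_in_ICinv321 in auto)

lemma sum_Pow_insert:
  assumes "finite A" "a \<notin> A"
  shows "(\<Sum>S\<in>Pow (insert a A). g S) = (\<Sum>S\<in>Pow A. g S) + (\<Sum>T\<in>Pow A. g (insert a T))"
proof -
  have "inj_on (insert a) (Pow A)"
    using assms(2) by (intro inj_onI) (metis Diff_insert_absorb PowD in_mono)
  then have "(\<Sum>S\<in>insert a ` Pow A. g S) = (\<Sum>T\<in>Pow A. g (insert a T))"
    by (simp add: sum.reindex)
  moreover have "(\<Sum>S\<in>Pow (insert a A). g S) = (\<Sum>S\<in>Pow A. g S) + (\<Sum>S\<in>insert a ` Pow A. g S)"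
    unfolding Pow_insert using assms by (intro sum.union_disjoint) auto
  ultimately show ?thesis by simp
qed

lemma sum_Pow_atLeastAtMost_Suc:
  "(\<Sum>S\<in>Pow {1..Suc m}. g S) =
    (\<Sum>S\<in>Pow {1..m}. g S) + (\<Sum>T\<in>Pow {1..m}. g (insert (Suc m) T))"
  using sum_Pow_insert[of "{1..m}" "Suc m" g] by (simp add: atLeastAtMostSuc_conv)

lemma run_ends_insert_Suc:
  assumes "T \<subseteq> {1..m}"
  shows "run_ends T - {Suc m} = run_ends T"
    and "run_ends (insert (Suc m) T) - {Suc m} = run_ends T - {m}"
    and "(\<Sum>i\<in>run_ends (insert (Suc m) T). w i) = w (Suc m) + (\<Sum>i\<in>run_ends T - {m}. w i)"
proof -
  have "run_ends (insert (Suc m) T) = insert (Suc m) (run_ends T - {m})"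
    using assms by (auto simp: run_ends_def)
  moreover have "finite (run_ends T)"
    using finite_subset[OF assms] by (simp add: run_ends_def)
  moreover have "Suc m \<notin> run_ends T" using assms by (auto simp: run_ends_def)
  ultimately show
    "(\<Sum>i\<in>run_ends (insert (Suc m) T). w i) = w (Suc m) + (\<Sum>i\<in>run_ends T - {m}. w i)"
    by simp
qed (use assms in \<open>auto simp: run_ends_def\<close>)

definition run_end_gf :: "(nat \<Rightarrow> nat) \<Rightarrow> 'a::comm_ring_1 \<Rightarrow> nat \<Rightarrow> 'a" where
  "run_end_gf w q m = (\<Sum>S\<in>Pow {1..m}. q ^ (\<Sum>i\<in>run_ends S. w i))"

text \<open>In the open variant \<open>m\<close> is not counted as a run end: adding \<open>m + 1\<close> to \<open>S\<close> would
  extend that run.\<close>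

definition run_end_gf_open :: "(nat \<Rightarrow> nat) \<Rightarrow> 'a::comm_ring_1 \<Rightarrow> nat \<Rightarrow> 'a" where
  "run_end_gf_open w q m = (\<Sum>S\<in>Pow {1..m}. q ^ (\<Sum>i\<in>run_ends S - {m}. w i))"

lemma run_end_gf_Suc:
  "run_end_gf w q (Suc m) = run_end_gf w q m + q ^ w (Suc m) * run_end_gf_open w q m"
proof -
  have "run_end_gf w q (Suc m) =
      run_end_gf w q m + (\<Sum>T\<in>Pow {1..m}. q ^ (\<Sum>i\<in>run_ends (insert (Suc m) T). w i))"
    unfolding run_end_gf_def by (rule sum_Pow_atLeastAtMost_Suc)
  also have "(\<Sum>T\<in>Pow {1..m}. q ^ (\<Sum>i\<in>run_ends (insert (Suc m) T). w i)) =
      (\<Sum>T\<in>Pow {1..m}. q ^ w (Suc m) * q ^ (\<Sum>i\<in>run_ends T - {m}. w i))"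
    by (intro sum.cong refl) (simp add: run_ends_insert_Suc(3) power_add)
  finally show ?thesis by (simp add: run_end_gf_open_def sum_distrib_left)
qed

lemma run_end_gf_open_Suc:
  "run_end_gf_open w q (Suc m) = run_end_gf w q m + run_end_gf_open w q m"
  unfolding run_end_gf_open_def run_end_gf_def sum_Pow_atLeastAtMost_Suc[where m=m]
  by (intro arg_cong2[where f="(+)"] sum.cong refl) (simp_all add: run_ends_insert_Suc(1,2))

lemma run_end_gf_recurrence:
  assumes "w (Suc (Suc m)) = w (Suc m) + c"
  shows "run_end_gf w q (Suc (Suc m)) =
    (1 + q ^ c) * run_end_gf w q (Suc m) + (q ^ w (Suc (Suc m)) - q ^ c) * run_end_gf w q m"
proof -
  have open_m: "q ^ w (Suc m) * run_end_gf_open w q m = run_end_gf w q (Suc m) - run_end_gf w q m"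
    by (simp add: run_end_gf_Suc)
  have "run_end_gf w q (Suc (Suc m)) = run_end_gf w q (Suc m) +
      q ^ w (Suc (Suc m)) * run_end_gf w q m + q ^ c * (q ^ w (Suc m) * run_end_gf_open w q m)"
    by (simp add: run_end_gf_Suc[of w q "Suc m"] run_end_gf_open_Suc assms power_add
        distrib_left mult_ac)
  also have "\<dots> = run_end_gf w q (Suc m) +
      q ^ w (Suc (Suc m)) * run_end_gf w q m + q ^ c * (run_end_gf w q (Suc m) - run_end_gf w q m)"
    by (simp only: open_m)
  also have "\<dots> =
      (1 + q ^ c) * run_end_gf w q (Suc m) + (q ^ w (Suc (Suc m)) - q ^ c) * run_end_gf w q m"
    by (simp add: algebra_simps)
  finally show ?thesis .
qed

lemma dpoly_eq_run_end_gf: "dpoly n q = run_end_gf (\<lambda>_. 1) q n"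
proof -
  have "dpoly n q = (\<Sum>p\<in>ICinv321 (2*n). q ^ card (run_ends {i \<in> {1..n}. i < p i}))"
    unfolding dpoly_def desPlus_def by (rule sum.cong) (auto simp: ICinv321_DesPlus_eq_run_ends)
  also have "\<dots> = (\<Sum>S\<in>Pow {1..n}. q ^ card (run_ends S))"
    by (rule sum.reindex_bij_betw[OF bij_betw_excedances])
  also have "\<dots> = run_end_gf (\<lambda>_. 1) q n"
    by (simp add: run_end_gf_def)
  finally show ?thesis .
qed

lemma ppoly_eq_run_end_gf: "ppoly n q = run_end_gf (\<lambda>i. i) q n"
proof -
  have "ppoly n q = (\<Sum>p\<in>ICinv321 (2*n). q ^ \<Sum>(run_ends {i \<in> {1..n}. i < p i}))"
    unfolding ppoly_def majPlus_def by (rule sum.cong) (auto simp: ICinv321_DesPlus_eq_run_ends)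
  also have "\<dots> = run_end_gf (\<lambda>i. i) q n"
    unfolding run_end_gf_def by (rule sum.reindex_bij_betw[OF bij_betw_excedances])
  finally show ?thesis .
qed

theorem mainTheorem7:
  fixes q :: "'a::comm_ring_1" and n :: nat
  assumes "n \<ge> 2"
  shows "dpoly n q = 2 * dpoly (n - 1) q + (q - 1) * dpoly (n - 2) q
       \<and> ppoly n q = (1 + q) * ppoly (n - 1) q + (q ^ n - q) * ppoly (n - 2) q"
proof -
  obtain k where n: "n = Suc (Suc k)" using assms by (metis add_2_eq_Suc le_Suc_ex)
  then have "n - 1 = Suc k" "n - 2 = k" by simp_all
  moreover have "run_end_gf (\<lambda>_. 1) q n =
      2 * run_end_gf (\<lambda>_. 1) q (Suc k) + (q - 1) * run_end_gf (\<lambda>_. 1) q k"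
    using run_end_gf_recurrence[of "\<lambda>_. 1" k 0 q] n by (simp add: one_add_one)
  moreover have "run_end_gf (\<lambda>i. i) q n =
      (1 + q) * run_end_gf (\<lambda>i. i) q (Suc k) + (q ^ n - q) * run_end_gf (\<lambda>i. i) q k"
    using run_end_gf_recurrence[of "\<lambda>i. i" k 1 q] n by simp
  ultimately show ?thesis by (simp only: dpoly_eq_run_end_gf ppoly_eq_run_end_gf)
qed

end
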